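(* Let $p\ge3$ be an integer, $\eta>0$, and $Y\sim\chi^2_p(\eta)$. Let $\psi:(0,\infty)\to\mathbb{R}$ be measurable and suppose there is $d\in(0,\infty)$ with $|\psi(y)|\le d/y$ for all $y>0$. Then $|E[\psi(Y)\mid\eta]|\le 2d/\eta$; in particular $E[\psi(Y)\mid\eta]=O(\eta^{-1})$ as $\eta\to\infty$.
   Context: $\chi^2_p(\eta)$ denotes the noncentral chi-square distribution with $p$ degrees of freedom and noncentrality $\eta$, i.e. the law of $\|Z\|^2$ where $Z\sim N_p(\gamma,I_p)$ and $\|\gamma\|^2=\eta$; its density at $v>0$ is $\sum_{n=0}^\infty\frac{e^{-\eta/2}(\eta/2)^n}{n!}\frac{(v/2)^{n+p/2-1}e^{-v/2}}{2\Gamma(n+p/2)}$. *)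

theory Defs
  imports "HOL-Analysis.Analysis" "HOL-Library.Landau_Symbols"
begin

definition nc_chisq_density :: "nat \<Rightarrow> real \<Rightarrow> real \<Rightarrow> real" where
  "nc_chisq_density p eta v =
     (if v > 0 then
        (\<Sum>n. exp (- eta / 2) * (eta / 2) ^ n / fact n *
             ((v / 2) powr (real n + real p / 2 - 1) * exp (- v / 2)
              / (2 * Gamma (real n + real p / 2))))
      else 0)"

definition nc_chisq_expect :: "nat \<Rightarrow> real \<Rightarrow> (real \<Rightarrow> real) \<Rightarrow> real" where
  "nc_chisq_expect p eta psi =
     (LINT v:{0<..}|lborel. nc_chisq_density p eta v * psi v)"

end

theory Submission
  imports Defs
begin

(*
  The noncentral density is the Poisson(eta/2) mixture of the central chi^2 densities with
  p + 2n degrees of freedom. Since v times the chi^2_(m-2) density is (m - 2) times the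
  chi^2_m density, E[1/chi^2_m] = 1/(m - 2); hence for Y ~ chi^2_p(eta) with p >= 3
    E[1/Y] = Sum_n P_n / (p + 2n - 2) <= Sum_n P_n / (n + 1) = (1 - exp(-eta/2)) / (eta/2) <= 2/eta,
  where P_n are the Poisson weights, and the bound on psi gives |E psi(Y)| <= d E[1/Y].
*)

definition poisson_weight :: "real \<Rightarrow> nat \<Rightarrow> real" where
  "poisson_weight l n = exp (- l) * l ^ n / fact n"

definition chisq_density :: "real \<Rightarrow> real \<Rightarrow> real" where
  "chisq_density m v = (v / 2) powr (m / 2 - 1) * exp (- v / 2) / (2 * Gamma (m / 2))"

lemma poisson_weight_nonneg: "l \<ge> 0 \<Longrightarrow> poisson_weight l n \<ge> 0"
  by (simp add: poisson_weight_def)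

lemma poisson_weight_Suc: "poisson_weight l (Suc n) = poisson_weight l n * l / (real n + 1)"
  by (simp add: poisson_weight_def field_simps)

lemma sums_poisson_weight: "poisson_weight l sums 1"
proof -
  have "(\<lambda>n. exp (- l) * (l ^ n /\<^sub>R fact n)) sums (exp (- l) * exp l)"
    by (intro sums_mult exp_converges)
  moreover have "poisson_weight l = (\<lambda>n. exp (- l) * (l ^ n /\<^sub>R fact n))"
    by (simp add: fun_eq_iff poisson_weight_def divide_inverse mult_ac)
  ultimately show ?thesis
    by (simp add: exp_minus)
qed

lemma sums_poisson_weight_divide_Suc:
  assumes "l > 0"
  shows "(\<lambda>n. poisson_weight l n / (real n + 1)) sums ((1 - exp (- l)) / l)"
proof -
  have "(\<lambda>n. poisson_weight l (Suc n)) sums (1 - poisson_weight l 0)"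
    using sums_poisson_weight by (simp add: sums_Suc_iff)
  then have "(\<lambda>n. poisson_weight l (Suc n) / l) sums ((1 - exp (- l)) / l)"
    by (intro sums_divide) (simp add: poisson_weight_def)
  then show ?thesis
    using assms by (simp add: poisson_weight_Suc)
qed

lemma borel_measurable_chisq_density [measurable]: "chisq_density m \<in> borel_measurable borel"
  unfolding chisq_density_def by measurable

lemma chisq_density_nonneg: "m > 0 \<Longrightarrow> chisq_density m v \<ge> 0"
  by (simp add: chisq_density_def)

lemma chisq_density_add_2:
  assumes "m > 0" "v > 0"
  shows "chisq_density (m + 2) v = chisq_density m v * v / m"
proof -
  have "m / 2 \<notin> \<int>\<^sub>\<le>\<^sub>0"
    using assms(1) nonpos_Ints_nonpos by force
  then have Gamma_shift: "Gamma ((m + 2) / 2) = m / 2 * Gamma (m / 2)"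
    using Gamma_plus1[of "m / 2"] by (simp add: add_divide_distrib)
  have powr_shift: "(v / 2) powr ((m + 2) / 2 - 1) = (v / 2) powr (m / 2 - 1) * (v / 2)"
    using assms(2) powr_add[of "v / 2" "m / 2 - 1" 1] by (simp add: add_divide_distrib)
  show ?thesis
    using assms unfolding chisq_density_def Gamma_shift powr_shift by (simp add: field_simps)
qed

lemma nn_integral_chisq_density:
  assumes "m > 0"
  shows "(\<integral>\<^sup>+v. ennreal (indicator {0<..} v * chisq_density m v) \<partial>lborel) = 1"
proof -
  let ?f = "\<lambda>v. ennreal (indicator {0<..} v * chisq_density m v)"
  have G: "Gamma (m / 2) > 0"
    using assms by simp
  have f_scaled: "?f (0 + 2 * u) =
      ennreal (1 / (2 * Gamma (m / 2))) * ennreal (indicator {0..} u * u powr (m / 2 - 1) / exp u)"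
    for u :: real
    using G by (auto simp: ennreal_mult'[symmetric] chisq_density_def indicator_def exp_minus field_simps)
  have "(\<integral>\<^sup>+v. ?f v \<partial>lborel) = 2 * (\<integral>\<^sup>+u. ?f (0 + 2 * u) \<partial>lborel)"
    by (subst nn_integral_real_affine[where c = 2 and t = 0]) (auto simp: chisq_density_def)
  also have "\<dots> = 2 * (ennreal (1 / (2 * Gamma (m / 2))) * Gamma (m / 2))"
    unfolding f_scaled using assms by (simp add: nn_integral_cmult Gamma_conv_nn_integral_real)
  also have "\<dots> = 1"
    using G by (simp add: ennreal_mult'[symmetric] del: ennreal_half flip: ennreal_numeral)
  finally show ?thesis .
qed

lemma nn_integral_chisq_density_divide:
  assumes "m > 2"
  shows "(\<integral>\<^sup>+v. ennreal (indicator {0<..} v * chisq_density m v / v) \<partial>lborel) = ennreal (1 / (m - 2))"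
proof -
  have "ennreal (indicator {0<..} v * chisq_density m v / v) =
      ennreal (1 / (m - 2)) * ennreal (indicator {0<..} v * chisq_density (m - 2) v)" for v :: real
    using assms chisq_density_add_2[of "m - 2" v] chisq_density_nonneg[of "m - 2" v]
    by (auto simp: ennreal_mult'[symmetric] indicator_def)
  then show ?thesis
    using assms by (simp add: nn_integral_cmult nn_integral_chisq_density)
qed

lemma summable_poisson_chisq_mixture:
  assumes "l \<ge> 0" "m > 0" "v > 0"
  shows "summable (\<lambda>n. poisson_weight l n * chisq_density (m + 2 * real n) v)"
    (is "summable ?t")
proof (rule summable_ratio_test[where c = "1 / 2" and N = "max 1 (nat \<lceil>l * v\<rceil>)"])
  fix n assume n: "n \<ge> max 1 (nat \<lceil>l * v\<rceil>)"
  define r where "r = l * v / ((real n + 1) * (m + 2 * real n))"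
  have t_Suc: "?t (Suc n) = ?t n * r"
    using assms chisq_density_add_2[of "m + 2 * real n" v]
    by (simp add: r_def poisson_weight_Suc add_ac)
  have "r \<le> 1 / 2"
  proof -
    have "l * v \<le> real n + 1" "m + 2 * real n \<ge> 2"
      using n assms(2) by linarith+
    then have "2 * (l * v) \<le> (real n + 1) * 2"
      by simp
    also have "\<dots> \<le> (real n + 1) * (m + 2 * real n)"
      using \<open>m + 2 * real n \<ge> 2\<close> by (intro mult_left_mono) auto
    finally show ?thesis
      using assms(2) by (simp add: r_def divide_le_eq)
  qed
  moreover have t_nonneg: "?t n \<ge> 0" and r_nonneg: "r \<ge> 0"
    using assms by (auto simp: r_def intro!: mult_nonneg_nonneg poisson_weight_nonneg chisq_density_nonneg)
  ultimately have "?t n * r \<le> ?t n * (1 / 2)"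
    by (intro mult_left_mono)
  then show "norm (?t (Suc n)) \<le> 1 / 2 * norm (?t n)"
    unfolding t_Suc using t_nonneg r_nonneg by simp
qed simp

lemma nc_chisq_density_eq_mixture:
  assumes "v > 0"
  shows "nc_chisq_density p eta v =
    (\<Sum>n. poisson_weight (eta / 2) n * chisq_density (real p + 2 * real n) v)"
proof -
  have half_dof: "(real p + 2 * real n) / 2 = real n + real p / 2" for n
    by simp
  show ?thesis
    using assms unfolding chisq_density_def half_dof
    by (simp add: nc_chisq_density_def poisson_weight_def)
qed

lemma borel_measurable_nc_chisq_density [measurable]:
  "nc_chisq_density p eta \<in> borel_measurable borel"
  unfolding nc_chisq_density_def by measurable

lemma nc_chisq_density_nonneg:
  assumes "p > 0" "eta \<ge> 0"
  shows "nc_chisq_density p eta v \<ge> 0"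
proof (cases "v > 0")
  case True
  then show ?thesis
    using assms summable_poisson_chisq_mixture[of "eta / 2" "real p" v]
    by (auto simp: nc_chisq_density_eq_mixture intro!: suminf_nonneg mult_nonneg_nonneg
        poisson_weight_nonneg chisq_density_nonneg)
qed (simp add: nc_chisq_density_def)

lemma nn_integral_nc_chisq_density_divide:
  assumes "p \<ge> 3" "eta \<ge> 0"
  shows "(\<integral>\<^sup>+v. ennreal (indicator {0<..} v * nc_chisq_density p eta v / v) \<partial>lborel) =
    (\<Sum>n. ennreal (poisson_weight (eta / 2) n / (real p + 2 * real n - 2)))"
proof -
  let ?w = "poisson_weight (eta / 2)"
  let ?g = "\<lambda>n v. ennreal (?w n) *
    ennreal (indicator {0<..} v * chisq_density (real p + 2 * real n) v / v)"
  have w_nonneg: "?w n \<ge> 0" for n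
    using assms by (simp add: poisson_weight_nonneg)
  have expand: "ennreal (indicator {0<..} v * nc_chisq_density p eta v / v) = (\<Sum>n. ?g n v)" for v
  proof (cases "v > 0")
    case True
    let ?t = "\<lambda>n. ?w n * chisq_density (real p + 2 * real n) v / v"
    have summable: "summable ?t"
      using summable_poisson_chisq_mixture[of "eta / 2" "real p" v] assms True
      by (intro summable_divide) simp
    have "ennreal (indicator {0<..} v * nc_chisq_density p eta v / v) = ennreal (\<Sum>n. ?t n)"
      using True summable_poisson_chisq_mixture[of "eta / 2" "real p" v] assms
      by (simp add: nc_chisq_density_eq_mixture suminf_divide)
    also have "\<dots> = (\<Sum>n. ennreal (?t n))"
      using summable assms True w_nonneg by (intro suminf_ennreal2[symmetric]) (simp_all add: chisq_density_nonneg)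
    also have "\<dots> = (\<Sum>n. ?g n v)"
      using True w_nonneg by (simp add: ennreal_mult'[symmetric])
    finally show ?thesis .
  qed simp
  have "(\<integral>\<^sup>+v. ennreal (indicator {0<..} v * nc_chisq_density p eta v / v) \<partial>lborel) =
      (\<Sum>n. \<integral>\<^sup>+v. ?g n v \<partial>lborel)"
    unfolding expand by (rule nn_integral_suminf) measurable
  also have "\<dots> = (\<Sum>n. ennreal (?w n) * ennreal (1 / (real p + 2 * real n - 2)))"
    using assms by (simp add: nn_integral_cmult nn_integral_chisq_density_divide)
  also have "\<dots> = (\<Sum>n. ennreal (?w n / (real p + 2 * real n - 2)))"
    using assms w_nonneg by (simp add: ennreal_mult[symmetric])
  finally show ?thesis .
qed

lemma nn_integral_nc_chisq_density_divide_le: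
  assumes "p \<ge> 3" "eta > 0"
  shows "(\<integral>\<^sup>+v. ennreal (indicator {0<..} v * nc_chisq_density p eta v / v) \<partial>lborel) \<le>
    ennreal (2 / eta)"
proof -
  let ?w = "poisson_weight (eta / 2)"
  have "(\<Sum>n. ennreal (?w n / (real p + 2 * real n - 2))) \<le> (\<Sum>n. ennreal (?w n / (real n + 1)))"
    using assms by (intro suminf_le ennreal_leI divide_left_mono poisson_weight_nonneg) auto
  also have "\<dots> = ennreal ((1 - exp (- (eta / 2))) / (eta / 2))"
    using assms by (intro suminf_ennreal_eq sums_poisson_weight_divide_Suc) (auto simp: poisson_weight_nonneg)
  also have "\<dots> \<le> ennreal (2 / eta)"
    using assms by (intro ennreal_leI) (simp add: divide_simps)
  finally show ?thesis
    using assms by (simp add: nn_integral_nc_chisq_density_divide)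
qed

lemma norm_integral_le_of_nn_integral_norm_le:
  fixes f :: "'a \<Rightarrow> 'b::{banach, second_countable_topology}"
  assumes "(\<integral>\<^sup>+x. ennreal (norm (f x)) \<partial>M) \<le> ennreal B" "B \<ge> 0"
  shows "norm (integral\<^sup>L M f) \<le> B"
proof (cases "integrable M f")
  case True
  then show ?thesis
    using order_trans[OF integral_norm_bound_ennreal assms(1)] assms(2) by simp
qed (simp add: not_integrable_integral_eq assms(2))

lemma abs_nc_chisq_expect_le:
  assumes "p \<ge> 3" "eta > 0" and psi_bound: "\<And>y. y > 0 \<Longrightarrow> \<bar>psi y\<bar> \<le> d / y"
  shows "\<bar>nc_chisq_expect p eta psi\<bar> \<le> 2 * d / eta"
proof -
  have "d \<ge> 0"
    using psi_bound[of 1] by simp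
  have "ennreal (norm (indicator {0<..} v *\<^sub>R (nc_chisq_density p eta v * psi v))) \<le>
      ennreal d * ennreal (indicator {0<..} v * nc_chisq_density p eta v / v)" for v
  proof (cases "v > 0")
    case True
    have density_nonneg: "nc_chisq_density p eta v \<ge> 0"
      using assms by (intro nc_chisq_density_nonneg) auto
    then have "ennreal (norm (indicator {0<..} v *\<^sub>R (nc_chisq_density p eta v * psi v))) =
        ennreal (nc_chisq_density p eta v * \<bar>psi v\<bar>)"
      using True by (simp add: abs_mult)
    also have "\<dots> \<le> ennreal (nc_chisq_density p eta v * (d / v))"
      using density_nonneg psi_bound[OF True] by (intro ennreal_leI mult_left_mono)
    also have "\<dots> = ennreal d * ennreal (indicator {0<..} v * nc_chisq_density p eta v / v)"
      using True \<open>d \<ge> 0\<close> by (simp add: ennreal_mult'[symmetric] mult.commute)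
    finally show ?thesis .
  qed simp
  then have "(\<integral>\<^sup>+v. ennreal (norm (indicator {0<..} v *\<^sub>R (nc_chisq_density p eta v * psi v))) \<partial>lborel)
      \<le> (\<integral>\<^sup>+v. ennreal d * ennreal (indicator {0<..} v * nc_chisq_density p eta v / v) \<partial>lborel)"
    by (rule nn_integral_mono)
  also have "\<dots> = ennreal d *
      (\<integral>\<^sup>+v. ennreal (indicator {0<..} v * nc_chisq_density p eta v / v) \<partial>lborel)"
    by (rule nn_integral_cmult) measurable
  also have "\<dots> \<le> ennreal d * ennreal (2 / eta)"
    using nn_integral_nc_chisq_density_divide_le[OF assms(1,2)] by (rule mult_left_mono) simp
  also have "\<dots> = ennreal (2 * d / eta)"
    using \<open>d \<ge> 0\<close> assms(2) by (simp add: ennreal_mult[symmetric])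
  finally have "norm (LBINT v. indicator {0<..} v *\<^sub>R (nc_chisq_density p eta v * psi v)) \<le> 2 * d / eta"
    by (rule norm_integral_le_of_nn_integral_norm_le) (use \<open>d \<ge> 0\<close> assms(2) in simp)
  then show ?thesis
    by (simp add: nc_chisq_expect_def set_lebesgue_integral_def)
qed

theorem propositionA8:
  fixes p :: nat and eta d :: real and psi :: "real \<Rightarrow> real"
  assumes "p \<ge> 3"
    and "eta > 0"
    and "psi \<in> borel_measurable (restrict_space borel {0<..})"
    and "d > 0"
    and "\<And>y. y > 0 \<Longrightarrow> \<bar>psi y\<bar> \<le> d / y"
  shows "\<bar>nc_chisq_expect p eta psi\<bar> \<le> 2 * d / eta \<and>
         (\<lambda>e. nc_chisq_expect p e psi) \<in> O[at_top](\<lambda>e. 1 / e)"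
proof
  show "\<bar>nc_chisq_expect p eta psi\<bar> \<le> 2 * d / eta"
    using assms(1,2,5) by (rule abs_nc_chisq_expect_le)
  have "\<forall>\<^sub>F e in at_top. norm (nc_chisq_expect p e psi) \<le> 2 * d * norm (1 / e)"
    using eventually_gt_at_top[of "0::real"]
    by eventually_elim (use abs_nc_chisq_expect_le[OF assms(1) _ assms(5)] in simp)
  then show "(\<lambda>e. nc_chisq_expect p e psi) \<in> O[at_top](\<lambda>e. 1 / e)"
    by (rule bigoI)
qed

end
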